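(* Let $\mathcal{X}$ be a finite-dimensional Hilbert space with orthonormal basis $\{|j\rangle\}$, let $\xi\in\mathcal{D}(\mathcal{X})$ and let $\Phi$ be the erasure channel $\Phi(A)=\xi\operatorname{Tr}A$ (so $\Phi(\rho)=\xi$ for every density operator $\rho$). Let $U$ be a unitary on $\mathcal{X}$ and $\Psi(\rho)=U\rho U^\dagger$. Then for every $\sigma\in\mathcal{D}(\mathcal{X})$, $$G_{\mathrm{ch}}(\Phi,\Psi;\sigma)=\operatorname{Tr}\big(\sigma^2U^\dagger\xi U\big)\le\sum_i\lambda_i^{\downarrow}\mu_i^{\downarrow},$$ where $\lambda_1^\downarrow\ge\lambda_2^\downarrow\ge\dots$ are the eigenvalues of $\xi$ and $\mu_1^\downarrow\ge\mu_2^\downarrow\ge\dots$ the eigenvalues of $\sigma$.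
   Context: $\mathcal{D}(\mathcal{X})$ is the set of density operators on $\mathcal{X}$. Superfidelity: $G(\rho_1,\rho_2)=\operatorname{Tr}(\rho_1\rho_2)+\sqrt{1-\operatorname{Tr}\rho_1^2}\sqrt{1-\operatorname{Tr}\rho_2^2}$. Channel superfidelity: $G_{\mathrm{ch}}(\Phi,\Psi;\sigma)=\inf G\big((\Phi\otimes\mathbb{1}_{\mathcal{L}(\mathcal{Z})})(\xi'),(\Psi\otimes\mathbb{1}_{\mathcal{L}(\mathcal{Z})})(\xi')\big)$ over all finite-dimensional $\mathcal{Z}$ and all pure states $\xi'$ on $\mathcal{X}\otimes\mathcal{Z}$ with $\operatorname{Tr}_{\mathcal{Z}}\xi'=\sigma$. *)

theory Defs
  imports "Jordan_Normal_Form.Char_Poly" "Jordan_Normal_Form.Schur_Decomposition"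
begin

text \<open>Finite-dimensional Hilbert spaces are modelled as C^n (standard orthonormal basis),
operators as n x n complex matrices. The composite X (x) Z with dim X = n, dim Z = m is C^(n*m),
basis vector |i> (x) |k> having index i*m+k.\<close>

definition mtrace :: "complex mat \<Rightarrow> complex" where
  "mtrace A = (\<Sum>i<dim_row A. A $$ (i,i))"

definition adj :: "complex mat \<Rightarrow> complex mat" where
  "adj A = mat (dim_col A) (dim_row A) (\<lambda>(i,j). cnj (A $$ (j,i)))"

definition unitary :: "nat \<Rightarrow> complex mat \<Rightarrow> bool" where
  "unitary n U \<longleftrightarrow> U \<in> carrier_mat n n \<and> adj U * U = 1\<^sub>m n \<and> U * adj U = 1\<^sub>m n"

definition density :: "nat \<Rightarrow> complex mat \<Rightarrow> bool" where
  "density n \<rho> \<longleftrightarrow> \<rho> \<in> carrier_mat n n \<and> adj \<rho> = \<rho> \<and>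
     (\<forall>v \<in> carrier_vec n. (\<Sum>i<n. \<Sum>j<n. cnj (v $ i) * \<rho> $$ (i,j) * v $ j) \<in> \<real> \<and>
                             0 \<le> Re (\<Sum>i<n. \<Sum>j<n. cnj (v $ i) * \<rho> $$ (i,j) * v $ j)) \<and>
     mtrace \<rho> = 1"

definition pure_state :: "nat \<Rightarrow> complex mat \<Rightarrow> bool" where
  "pure_state d \<rho> \<longleftrightarrow> (\<exists>\<psi> \<in> carrier_vec d. (\<Sum>i<d. cmod (\<psi> $ i) ^ 2) = 1 \<and>
      \<rho> = mat d d (\<lambda>(i,j). \<psi> $ i * cnj (\<psi> $ j)))"

definition ptrace_Z :: "nat \<Rightarrow> nat \<Rightarrow> complex mat \<Rightarrow> complex mat" where
  "ptrace_Z n m R = mat n n (\<lambda>(i,j). \<Sum>k<m. R $$ (i*m+k, j*m+k))"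

text \<open>(Phi (x) id_{L(Z)}) applied to R, for a map Phi : L(X) -> L(X), dim X = n, dim Z = m.
  Writing R = sum_{k,l} B_{kl} (x) |k><l|, the result is sum_{k,l} Phi(B_{kl}) (x) |k><l|.\<close>
definition ext_channel :: "(complex mat \<Rightarrow> complex mat) \<Rightarrow> nat \<Rightarrow> nat \<Rightarrow> complex mat \<Rightarrow> complex mat" where
  "ext_channel \<Phi> n m R = mat (n*m) (n*m) (\<lambda>(p,q).
      \<Phi> (mat n n (\<lambda>(i,j). R $$ (i*m + p mod m, j*m + q mod m))) $$ (p div m, q div m))"

definition superfidelity :: "complex mat \<Rightarrow> complex mat \<Rightarrow> real" where
  "superfidelity \<rho>1 \<rho>2 = Re (mtrace (\<rho>1 * \<rho>2))
     + sqrt (1 - Re (mtrace (\<rho>1 * \<rho>1))) * sqrt (1 - Re (mtrace (\<rho>2 * \<rho>2)))"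

definition channel_superfidelity ::
  "nat \<Rightarrow> (complex mat \<Rightarrow> complex mat) \<Rightarrow> (complex mat \<Rightarrow> complex mat) \<Rightarrow> complex mat \<Rightarrow> real" where
  "channel_superfidelity n \<Phi> \<Psi> \<sigma> = Inf {superfidelity (ext_channel \<Phi> n m \<xi>') (ext_channel \<Psi> n m \<xi>') |
      m \<xi>'. pure_state (n*m) \<xi>' \<and> ptrace_Z n m \<xi>' = \<sigma>}"

definition eigenvalues_desc :: "nat \<Rightarrow> complex mat \<Rightarrow> real list \<Rightarrow> bool" where
  "eigenvalues_desc n A lam \<longleftrightarrow> A \<in> carrier_mat n n \<and> length lam = n \<and> sorted_wrt (\<ge>) lam \<and>
     char_poly A = (\<Prod>a \<leftarrow> map complex_of_real lam. [:- a, 1:])"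

end

theory Submission
  imports Defs
begin

text \<open>
  Let \<open>|\<psi>\<rangle>\<close> purify \<open>\<sigma>\<close>. The unitary channel keeps \<open>|\<psi>\<rangle>\<langle>\<psi>|\<close> pure, so the second summand
  of the superfidelity vanishes, and the overlap of this pure output with the erasure output
  \<open>\<xi> \<otimes> Tr\<^sub>X |\<psi>\<rangle>\<langle>\<psi>|\<close> equals \<open>Tr (W\<^sup>\<dagger> \<xi> W) = Tr (\<sigma>\<^sup>2 U\<^sup>\<dagger> \<xi> U)\<close> with \<open>W = U \<sigma>\<close>, whichever
  purification was chosen. Since purifications exist (Gram factorisation of \<open>\<sigma>\<close>), the infimum is
  over this single value. For the bound, \<open>Tr (W\<^sup>\<dagger> \<xi> W) \<le> \<lambda>\<^sub>1 Tr (W\<^sup>\<dagger> W) = \<lambda>\<^sub>1 Tr \<sigma>\<^sup>2 \<le> \<lambda>\<^sub>1 \<mu>\<^sub>1\<close>,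
  and \<open>\<lambda>\<^sub>1 \<mu>\<^sub>1 \<le> \<Sum>\<^sub>i \<lambda>\<^sub>i \<mu>\<^sub>i\<close> because all eigenvalues of density operators are nonnegative.
\<close>

lemma index_mult_mat_sum:
  assumes "A \<in> carrier_mat n k" "B \<in> carrier_mat k m" "i < n" "j < m"
  shows "(A * B) $$ (i,j) = (\<Sum>a<k. A $$ (i,a) * B $$ (a,j))"
  using assms by (auto simp: scalar_prod_def lessThan_atLeast0 intro!: sum.cong)

lemma mtrace_mult_comm:
  assumes "A \<in> carrier_mat n k" "B \<in> carrier_mat k n"
  shows "mtrace (A * B) = mtrace (B * A)"
proof -
  have "mtrace (A * B) = (\<Sum>i<n. \<Sum>a<k. A $$ (i,a) * B $$ (a,i))"
    unfolding mtrace_def using assms by (simp del: index_mult_mat(1) add: index_mult_mat_sum)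
  also have "\<dots> = (\<Sum>a<k. \<Sum>i<n. B $$ (a,i) * A $$ (i,a))"
    by (subst sum.swap) (simp add: mult.commute)
  also have "\<dots> = mtrace (B * A)"
    unfolding mtrace_def using assms by (simp del: index_mult_mat(1) add: index_mult_mat_sum)
  finally show ?thesis .
qed

lemma sum_lessThan_mult_split:
  fixes f :: "nat \<Rightarrow> 'a::comm_monoid_add"
  shows "(\<Sum>p<n*m. f p) = (\<Sum>i<n. \<Sum>k<m. f (i*m+k))"
proof -
  have "(\<Sum>p<n*m. f p) = (\<Sum>i<n. sum f {i*m..<i*m+m})"
    using sum.nat_group[of f m n] by simp
  also have "\<dots> = (\<Sum>i<n. \<Sum>k<m. f (i*m+k))"
  proof (rule sum.cong[OF refl])
    fix i
    show "sum f {i*m..<i*m+m} = (\<Sum>k<m. f (i*m+k))"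
      using sum.shift_bounds_nat_ivl[of f 0 "i*m" m] by (simp add: lessThan_atLeast0 add.commute)
  qed
  finally show ?thesis .
qed

lemma block_index_less:
  fixes i k n m :: nat
  assumes "i < n" "k < m"
  shows "i*m+k < n*m"
proof -
  have "i*m+k < Suc i * m" using assms by simp
  also have "\<dots> \<le> n*m" using assms by (intro mult_le_mono1) simp
  finally show ?thesis .
qed

lemma block_index_split:
  fixes p n m :: nat
  assumes "p < n*m"
  shows "p div m < n" "p mod m < m"
proof -
  have "0 < m" using assms by (cases m) auto
  then show "p mod m < m" by simp
  show "p div m < n" using assms by (simp add: less_mult_imp_div_less)
qed

lemma pow_mat_add:
  assumes "A \<in> carrier_mat n n"
  shows "A ^\<^sub>m (a + b) = A ^\<^sub>m a * A ^\<^sub>m b"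
proof (induction b)
  case (Suc b)
  have "A ^\<^sub>m (a + Suc b) = (A ^\<^sub>m a * A ^\<^sub>m b) * A" using Suc by simp
  also have "\<dots> = A ^\<^sub>m a * (A ^\<^sub>m b * A)" using assms by (simp add: assoc_mult_mat[of _ n n _ n _ n])
  finally show ?case by simp
qed (use assms in simp)

lemma pow_mat_mult_comm:
  assumes "A \<in> carrier_mat n n"
  shows "A ^\<^sub>m k * A = A * A ^\<^sub>m k"
  using pow_mat_add[OF assms, of k 1] pow_mat_add[OF assms, of 1 k] assms by (simp add: add.commute)

lemma adj_carrier_mat [simp]: "U \<in> carrier_mat n k \<Longrightarrow> adj U \<in> carrier_mat k n"
  unfolding adj_def by simp

lemma adj_index: "U \<in> carrier_mat n k \<Longrightarrow> i < k \<Longrightarrow> j < n \<Longrightarrow> adj U $$ (i,j) = cnj (U $$ (j,i))"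
  unfolding adj_def by simp

section \<open>Hermitian and positive semidefinite forms\<close>

abbreviation entries :: "complex mat \<Rightarrow> nat \<Rightarrow> nat \<Rightarrow> complex" where
  "entries A \<equiv> \<lambda>i j. A $$ (i,j)"

abbreviation sq_norm :: "nat \<Rightarrow> (nat \<Rightarrow> complex) \<Rightarrow> real" where
  "sq_norm n v \<equiv> \<Sum>i<n. (cmod (v i))^2"

definition quad_form :: "nat \<Rightarrow> (nat \<Rightarrow> nat \<Rightarrow> complex) \<Rightarrow> (nat \<Rightarrow> complex) \<Rightarrow> complex" where
  "quad_form n S v = (\<Sum>i<n. \<Sum>j<n. cnj (v i) * S i j * v j)"

definition hermitian_on :: "nat \<Rightarrow> (nat \<Rightarrow> nat \<Rightarrow> complex) \<Rightarrow> bool" where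
  "hermitian_on n S \<longleftrightarrow> (\<forall>i<n. \<forall>j<n. S i j = cnj (S j i))"

definition psd_on :: "nat \<Rightarrow> (nat \<Rightarrow> nat \<Rightarrow> complex) \<Rightarrow> bool" where
  "psd_on n S \<longleftrightarrow> (\<forall>v. 0 \<le> Re (quad_form n S v))"

lemma cnj_mult_self: "cnj z * z = complex_of_real ((cmod z)^2)"
  by (metis complex_norm_square mult.commute)

lemma Re_cnj_mult_self: "Re (cnj z * z) = (cmod z)^2"
  by (simp only: cnj_mult_self Re_complex_of_real)

lemma cmod_sum_cnj_mult_sq_le:
  fixes v y :: "nat \<Rightarrow> complex"
  assumes "sq_norm n v = 1"
  shows "(cmod (\<Sum>i<n. cnj (v i) * y i))^2 \<le> sq_norm n y"
proof -
  define c where "c = (\<Sum>i<n. cnj (v i) * y i)"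
  have vv: "(\<Sum>i<n. cnj (v i) * v i) = 1"
    using assms by (simp only: cnj_mult_self of_real_sum[symmetric]) simp
  have yv: "(\<Sum>i<n. cnj (y i) * v i) = cnj c"
    unfolding c_def by (simp add: mult.commute)
  \<comment> \<open>expand \<open>0 \<le> \<parallel>y - c v\<parallel>\<^sup>2\<close>\<close>
  have "(\<Sum>i<n. cnj (y i - c * v i) * (y i - c * v i)) =
     (\<Sum>i<n. cnj (y i) * y i) - cnj c * (\<Sum>i<n. cnj (v i) * y i) - c * (\<Sum>i<n. cnj (y i) * v i)
       + cnj c * c * (\<Sum>i<n. cnj (v i) * v i)"
    by (simp add: algebra_simps sum.distrib sum_subtractf sum_distrib_left)
  also have "\<dots> = (\<Sum>i<n. cnj (y i) * y i) - cnj c * c"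
    using vv yv unfolding c_def[symmetric] by (simp add: algebra_simps)
  finally have eq: "(\<Sum>i<n. cnj (y i - c * v i) * (y i - c * v i)) = (\<Sum>i<n. cnj (y i) * y i) - cnj c * c" .
  have "0 \<le> sq_norm n (\<lambda>i. y i - c * v i)" by (simp add: sum_nonneg)
  also have "\<dots> = Re (\<Sum>i<n. cnj (y i - c * v i) * (y i - c * v i))"
    by (simp only: Re_sum Re_cnj_mult_self)
  also have "\<dots> = sq_norm n y - (cmod c)^2"
    by (simp only: eq minus_complex.simps Re_sum Re_cnj_mult_self)
  finally show ?thesis unfolding c_def by simp
qed

lemma quad_form_add_basis:
  assumes h: "hermitian_on n S" and k: "k < n"
  shows "quad_form n S (\<lambda>i. v i + (if i = k then t else 0)) =
     quad_form n S v + cnj t * (\<Sum>j<n. S k j * v j) + t * cnj (\<Sum>j<n. S k j * v j) + cnj t * t * S k k"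
proof -
  define e where "e = (\<lambda>i::nat. if i = k then t else 0)"
  have inner: "(\<Sum>j<n. f j * e j) = f k * t" for f :: "nat \<Rightarrow> complex"
  proof -
    have "(\<Sum>j<n. f j * e j) = (\<Sum>j<n. if j = k then f j * t else 0)"
      by (rule sum.cong) (auto simp: e_def)
    then show ?thesis using k by simp
  qed
  have outer: "(\<Sum>i<n. cnj (e i) * f i) = cnj t * f k" for f :: "nat \<Rightarrow> complex"
  proof -
    have "(\<Sum>i<n. cnj (e i) * f i) = (\<Sum>i<n. if i = k then cnj t * f i else 0)"
      by (rule sum.cong) (auto simp: e_def)
    then show ?thesis using k by simp
  qed
  have expand: "cnj (v i + e i) * S i j * (v j + e j) = cnj (v i) * S i j * v j + cnj (v i) * S i j * e j
     + cnj (e i) * (S i j * v j) + cnj (e i) * (S i j * e j)" for i j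
    by (simp add: algebra_simps)
  have split: "quad_form n S (\<lambda>i. v i + e i) = quad_form n S v
     + (\<Sum>i<n. \<Sum>j<n. cnj (v i) * S i j * e j) + (\<Sum>i<n. cnj (e i) * (\<Sum>j<n. S i j * v j))
     + (\<Sum>i<n. cnj (e i) * (\<Sum>j<n. S i j * e j))"
    unfolding quad_form_def by (simp only: expand sum.distrib sum_distrib_left)
  have cross: "(\<Sum>i<n. \<Sum>j<n. cnj (v i) * S i j * e j) = t * cnj (\<Sum>j<n. S k j * v j)"
  proof -
    have "(\<Sum>i<n. \<Sum>j<n. cnj (v i) * S i j * e j) = (\<Sum>i<n. t * cnj (S k i * v i))"
    proof (rule sum.cong[OF refl])
      fix i assume "i \<in> {..<n}"
      then have "S i k = cnj (S k i)" using h k unfolding hermitian_on_def by blast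
      then show "(\<Sum>j<n. cnj (v i) * S i j * e j) = t * cnj (S k i * v i)"
        by (simp only: inner) simp
    qed
    also have "\<dots> = t * cnj (\<Sum>j<n. S k j * v j)" by (simp add: sum_distrib_left)
    finally show ?thesis .
  qed
  have "quad_form n S (\<lambda>i. v i + e i) =
     quad_form n S v + cnj t * (\<Sum>j<n. S k j * v j) + t * cnj (\<Sum>j<n. S k j * v j) + cnj t * t * S k k"
    unfolding split cross unfolding outer inner by (simp add: algebra_simps)
  then show ?thesis unfolding e_def .
qed

lemma hermitian_on_diag_real:
  assumes "hermitian_on n S" "k < n"
  shows "S k k = complex_of_real (Re (S k k))"
proof -
  have "S k k = cnj (S k k)" using assms unfolding hermitian_on_def by blast
  then have "Im (S k k) = 0" by (metis cnj.sel(2) neg_equal_zero)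
  then show ?thesis by (simp add: complex_eq_iff)
qed

lemma quad_form_basis:
  assumes "k < n"
  shows "quad_form n S (\<lambda>i. if i = k then 1 else 0) = S k k"
proof -
  have "quad_form n S (\<lambda>i. if i = k then 1 else 0) = (\<Sum>i<n. \<Sum>j<n. if i = k \<and> j = k then S k k else 0)"
    unfolding quad_form_def by (intro sum.cong refl) auto
  also have "\<dots> = (\<Sum>i<n. if i = k then S k k else 0)"
    using assms by (intro sum.cong refl) auto
  finally show ?thesis using assms by simp
qed

lemma psd_on_diag_nonneg: "psd_on n S \<Longrightarrow> k < n \<Longrightarrow> 0 \<le> Re (S k k)"
  unfolding psd_on_def by (metis quad_form_basis)

text \<open>Both lemmas below evaluate the form at \<open>v + t e\<^sub>k\<close>, a quadratic polynomial in \<open>t\<close>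
  (linear if \<open>S k k = 0\<close>), at a value of \<open>t\<close> making it as small as needed.\<close>

lemma psd_on_row_bound:
  assumes h: "hermitian_on n S" and p: "psd_on n S" and k: "k < n" and r: "0 < Re (S k k)"
  shows "(cmod (\<Sum>j<n. S k j * v j))^2 / Re (S k k) \<le> Re (quad_form n S v)"
proof -
  define b where "b = (\<Sum>j<n. S k j * v j)"
  define r where "r = Re (S k k)"
  have skk: "S k k = complex_of_real r" unfolding r_def using hermitian_on_diag_real[OF h k] .
  have r0: "r \<noteq> 0" using r unfolding r_def by simp
  define t where "t = - b / complex_of_real r"
  have "0 \<le> Re (quad_form n S (\<lambda>i. v i + (if i = k then t else 0)))" using p unfolding psd_on_def by blast
  also have "quad_form n S (\<lambda>i. v i + (if i = k then t else 0)) = quad_form n S v - cnj b * b / complex_of_real r"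
    unfolding quad_form_add_basis[OF h k] b_def[symmetric] skk t_def using r0 by (simp add: field_simps)
  also have "Re \<dots> = Re (quad_form n S v) - (cmod b)^2 / r"
    using Re_cnj_mult_self[of b] by (simp add: Re_divide_of_real)
  finally show ?thesis unfolding b_def r_def by simp
qed

lemma psd_on_zero_diag_row:
  assumes h: "hermitian_on n S" and p: "psd_on n S" and k: "k < n" and z: "S k k = 0" and j: "j < n"
  shows "S k j = 0"
proof (rule ccontr)
  define v where "v = (\<lambda>i::nat. if i = j then 1 else 0 :: complex)"
  define b where "b = (\<Sum>i<n. S k i * v i)"
  have "b = (\<Sum>i<n. if i = j then S k i else 0)" unfolding b_def v_def by (rule sum.cong) auto
  then have b: "b = S k j" using j by simp
  assume "S k j \<noteq> 0"
  then have b0: "0 < (cmod b)^2" unfolding b by simp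
  define q where "q = Re (quad_form n S v)"
  define s where "s = (q + 1) / (2 * (cmod b)^2)"
  define t where "t = - complex_of_real s * b"
  have "0 \<le> Re (quad_form n S (\<lambda>i. v i + (if i = k then t else 0)))" using p unfolding psd_on_def by blast
  also have "quad_form n S (\<lambda>i. v i + (if i = k then t else 0)) = quad_form n S v - 2 * complex_of_real s * (cnj b * b)"
    unfolding quad_form_add_basis[OF h k] b_def[symmetric] z t_def by (simp add: algebra_simps)
  also have "Re \<dots> = q - 2 * s * (cmod b)^2"
    unfolding q_def by (simp add: cnj_mult_self)
  also have "\<dots> = -1" unfolding s_def using b0 by (simp add: field_simps)
  finally show False by simp
qed

section \<open>Gram factorisation\<close>

definition supported_in_block :: "nat \<Rightarrow> nat \<Rightarrow> (nat \<Rightarrow> nat \<Rightarrow> complex) \<Rightarrow> bool" where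
  "supported_in_block n k S \<longleftrightarrow> (\<forall>i<n. \<forall>j<n. k \<le> i \<or> k \<le> j \<longrightarrow> S i j = 0)"

lemma quad_form_sub_rank_one:
  "quad_form n (\<lambda>i j. S i j - u i * cnj (u j)) v
     = quad_form n S v - cnj (\<Sum>j<n. cnj (u j) * v j) * (\<Sum>j<n. cnj (u j) * v j)"
proof -
  have "quad_form n (\<lambda>i j. S i j - u i * cnj (u j)) v
      = quad_form n S v - (\<Sum>i<n. \<Sum>j<n. cnj (v i) * u i * (cnj (u j) * v j))"
    unfolding quad_form_def by (simp add: algebra_simps sum_subtractf)
  also have "(\<Sum>i<n. \<Sum>j<n. cnj (v i) * u i * (cnj (u j) * v j))
      = cnj (\<Sum>j<n. cnj (u j) * v j) * (\<Sum>j<n. cnj (u j) * v j)"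
    by (simp add: sum_product mult.commute)
  finally show ?thesis .
qed

lemma rank_one_deflation_cancels:
  assumes h: "hermitian_on n S" and k: "k < n" and r: "0 < Re (S k k)"
    and u: "u = (\<lambda>i. S i k / complex_of_real (sqrt (Re (S k k))))"
  shows "\<And>i. i < n \<Longrightarrow> u i * cnj (u k) = S i k" and "\<And>j. j < n \<Longrightarrow> u k * cnj (u j) = S k j"
proof -
  define c where "c = complex_of_real (sqrt (Re (S k k)))"
  have cc: "c * c = S k k"
    using hermitian_on_diag_real[OF h k] r unfolding c_def by (simp flip: of_real_mult)
  have c0: "c \<noteq> 0" using r unfolding c_def by simp
  have herm: "S i j = cnj (S j i)" if "i < n" "j < n" for i j
    using h that unfolding hermitian_on_def by blast
  show col: "u i * cnj (u k) = S i k" if "i < n" for i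
  proof -
    have "u i * cnj (u k) = S i k * cnj (S k k) / (c * c)" unfolding u by (simp add: c_def)
    also have "\<dots> = S i k * (c * c) / (c * c)" using cc herm[OF k k] by simp
    also have "\<dots> = S i k" using c0 by simp
    finally show ?thesis .
  qed
  show "u k * cnj (u j) = S k j" if "j < n" for j
  proof -
    have "u k * cnj (u j) = cnj (u j * cnj (u k))" by simp
    also have "\<dots> = S k j" unfolding col[OF that] using herm[OF k that] by simp
    finally show ?thesis .
  qed
qed

lemma psd_on_rank_one_deflation:
  assumes h: "hermitian_on n S" and p: "psd_on n S" and k: "k < n" and r: "0 < Re (S k k)"
    and u: "u = (\<lambda>i. S i k / complex_of_real (sqrt (Re (S k k))))"
  shows "hermitian_on n (\<lambda>i j. S i j - u i * cnj (u j))"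
    and "psd_on n (\<lambda>i j. S i j - u i * cnj (u j))"
proof -
  have herm: "S i j = cnj (S j i)" if "i < n" "j < n" for i j
    using h that unfolding hermitian_on_def by blast
  show "hermitian_on n (\<lambda>i j. S i j - u i * cnj (u j))"
    unfolding hermitian_on_def
  proof (intro allI impI)
    fix i j assume "i < n" "j < n"
    then show "S i j - u i * cnj (u j) = cnj (S j i - u j * cnj (u i))"
      using herm[of i j] by (simp add: mult.commute)
  qed
  show "psd_on n (\<lambda>i j. S i j - u i * cnj (u j))"
    unfolding psd_on_def
  proof
    fix v
    have "(\<Sum>j<n. cnj (u j) * v j) = (\<Sum>j<n. S k j * v j) / complex_of_real (sqrt (Re (S k k)))"
      unfolding u using herm[OF k] by (simp add: sum_divide_distrib)
    then have "Re (cnj (\<Sum>j<n. cnj (u j) * v j) * (\<Sum>j<n. cnj (u j) * v j))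
        = (cmod (\<Sum>j<n. S k j * v j))^2 / Re (S k k)"
      unfolding Re_cnj_mult_self using r by (simp add: norm_divide power_divide)
    also have "\<dots> \<le> Re (quad_form n S v)" by (rule psd_on_row_bound[OF h p k r])
    finally show "0 \<le> Re (quad_form n (\<lambda>i j. S i j - u i * cnj (u j)) v)"
      unfolding quad_form_sub_rank_one by simp
  qed
qed

lemma supported_in_block_rank_one_deflation:
  assumes h: "hermitian_on n S" and supp: "supported_in_block n (Suc k) S"
    and k: "k < n" and r: "0 < Re (S k k)"
    and u: "u = (\<lambda>i. S i k / complex_of_real (sqrt (Re (S k k))))"
  shows "supported_in_block n k (\<lambda>i j. S i j - u i * cnj (u j))"
  unfolding supported_in_block_def
proof (intro allI impI)
  fix i j assume ij: "i < n" "j < n" "k \<le> i \<or> k \<le> j"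
  have zero: "S i j = 0" if "i < n" "j < n" "k < i \<or> k < j" for i j
    using supp that unfolding supported_in_block_def by auto
  show "S i j - u i * cnj (u j) = 0"
  proof (cases "i = k \<or> j = k")
    case True
    then show ?thesis using rank_one_deflation_cancels[OF h k r u] ij(1,2) by auto
  next
    case False
    then have "k < i \<or> k < j" using ij(3) by auto
    moreover have "u i = 0" if "k < i" using zero[OF ij(1) k] that unfolding u by simp
    moreover have "u j = 0" if "k < j" using zero[OF ij(2) k] that unfolding u by simp
    ultimately show ?thesis using zero[OF ij(1,2)] by auto
  qed
qed

lemma psd_on_supported_in_block_shrink:
  assumes h: "hermitian_on n S" and p: "psd_on n S" and supp: "supported_in_block n (Suc k) S"
    and diag: "k < n \<Longrightarrow> Re (S k k) \<le> 0"
  shows "supported_in_block n k S"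
  unfolding supported_in_block_def
proof (intro allI impI)
  fix i j assume ij: "i < n" "j < n" "k \<le> i \<or> k \<le> j"
  show "S i j = 0"
  proof (cases "i = k \<or> j = k")
    case True
    then have k: "k < n" using ij by auto
    have "S k k = 0"
      using diag[OF k] hermitian_on_diag_real[OF h k] psd_on_diag_nonneg[OF p k] by simp
    then have row: "S k l = 0" if "l < n" for l
      using psd_on_zero_diag_row[OF h p k _ that] by blast
    have "S i j = cnj (S j i)" using h ij unfolding hermitian_on_def by blast
    then show ?thesis using True ij row by auto
  next
    case False
    then show ?thesis using ij supp unfolding supported_in_block_def by auto
  qed
qed

text \<open>Cholesky-style: each step peels off one rank-one term.\<close>

lemma psd_on_gram_factorization_block:
  assumes "hermitian_on n S" "psd_on n S" "supported_in_block n k S"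
  shows "\<exists>M. \<forall>i<n. \<forall>j<n. S i j = (\<Sum>l<k. M i l * cnj (M j l))"
  using assms
proof (induction k arbitrary: S)
  case 0
  then show ?case unfolding supported_in_block_def by auto
next
  case (Suc k)
  show ?case
  proof (cases "k < n \<and> 0 < Re (S k k)")
    case True
    define u where "u = (\<lambda>i. S i k / complex_of_real (sqrt (Re (S k k))))"
    obtain M where M: "\<forall>i<n. \<forall>j<n. S i j - u i * cnj (u j) = (\<Sum>l<k. M i l * cnj (M j l))"
      using Suc.IH[OF psd_on_rank_one_deflation[OF Suc.prems(1,2) _ _ u_def]
          supported_in_block_rank_one_deflation[OF Suc.prems(1,3) _ _ u_def]] True by blast
    show ?thesis
      by (rule exI[of _ "\<lambda>i l. if l = k then u i else M i l"]) (use M in \<open>simp add: diff_eq_eq\<close>)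
  next
    case False
    then obtain M where M: "\<forall>i<n. \<forall>j<n. S i j = (\<Sum>l<k. M i l * cnj (M j l))"
      using Suc.IH[OF Suc.prems(1,2) psd_on_supported_in_block_shrink[OF Suc.prems]] by fastforce
    show ?thesis
      by (rule exI[of _ "\<lambda>i l. if l = k then 0 else M i l"]) (use M in simp)
  qed
qed

lemma psd_on_gram_factorization:
  "hermitian_on n S \<Longrightarrow> psd_on n S \<Longrightarrow> \<exists>M. \<forall>i<n. \<forall>j<n. S i j = (\<Sum>l<n. M i l * cnj (M j l))"
  by (rule psd_on_gram_factorization_block) (auto simp: supported_in_block_def)

section \<open>Density operators and purification\<close>

lemma density_carrier: "density n \<rho> \<Longrightarrow> \<rho> \<in> carrier_mat n n"
  and density_mtrace: "density n \<rho> \<Longrightarrow> mtrace \<rho> = 1"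
  unfolding density_def by blast+

lemma density_hermitian:
  assumes "density n \<rho>"
  shows "hermitian_on n (entries \<rho>)"
proof -
  have "adj \<rho> = \<rho>" and c: "\<rho> \<in> carrier_mat n n" using assms unfolding density_def by blast+
  then have "\<rho> $$ (i,j) = cnj (\<rho> $$ (j,i))" if "i < n" "j < n" for i j
    using adj_index[OF c that] by simp
  then show ?thesis unfolding hermitian_on_def by blast
qed

lemma density_quad_form:
  assumes "density n \<rho>"
  shows "quad_form n (entries \<rho>) v \<in> \<real>" and "0 \<le> Re (quad_form n (entries \<rho>) v)"
proof -
  have e: "(\<Sum>i<n. \<Sum>j<n. cnj (vec n v $ i) * \<rho> $$ (i,j) * vec n v $ j) = quad_form n (entries \<rho>) v"
    unfolding quad_form_def by (intro sum.cong refl) simp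
  have "vec n v \<in> carrier_vec n" by simp
  with assms have "(\<Sum>i<n. \<Sum>j<n. cnj (vec n v $ i) * \<rho> $$ (i,j) * vec n v $ j) \<in> \<real> \<and>
      0 \<le> Re (\<Sum>i<n. \<Sum>j<n. cnj (vec n v $ i) * \<rho> $$ (i,j) * vec n v $ j)"
    unfolding density_def by blast
  then show "quad_form n (entries \<rho>) v \<in> \<real>" "0 \<le> Re (quad_form n (entries \<rho>) v)"
    unfolding e by blast+
qed

lemma density_dim_pos: "density n \<rho> \<Longrightarrow> 0 < n"
  using density_mtrace[of n \<rho>] density_carrier[of n \<rho>] by (cases n) (auto simp: mtrace_def)

lemma density_psd: "density n \<rho> \<Longrightarrow> psd_on n (entries \<rho>)"
  unfolding psd_on_def using density_quad_form(2) by blast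

definition ketbra :: "nat \<Rightarrow> complex vec \<Rightarrow> complex mat" where
  "ketbra d \<psi> = mat d d (\<lambda>(i,j). \<psi> $ i * cnj (\<psi> $ j))"

lemma pure_state_ketbra:
  "pure_state d \<rho> \<longleftrightarrow> (\<exists>\<psi> \<in> carrier_vec d. sq_norm d (\<lambda>i. \<psi> $ i) = 1 \<and> \<rho> = ketbra d \<psi>)"
  unfolding pure_state_def ketbra_def ..

text \<open>The rows of a Gram factor \<open>\<sigma> = M M\<^sup>\<dagger>\<close> are the blocks of a purifying vector.\<close>

lemma density_purification:
  assumes d: "density n \<sigma>"
  obtains \<psi> where "pure_state (n*n) (ketbra (n*n) \<psi>)" "ptrace_Z n n (ketbra (n*n) \<psi>) = \<sigma>"
proof -
  have cs: "\<sigma> \<in> carrier_mat n n" using density_carrier[OF d] .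
  obtain M where M: "\<forall>i<n. \<forall>j<n. \<sigma> $$ (i,j) = (\<Sum>l<n. M i l * cnj (M j l))"
    using psd_on_gram_factorization[OF density_hermitian[OF d] density_psd[OF d]] by blast
  define \<psi> where "\<psi> = vec (n*n) (\<lambda>p. M (p div n) (p mod n))"
  have \<psi>: "\<psi> $ (i*n+k) = M i k" if "i < n" "k < n" for i k
    unfolding \<psi>_def using that by (simp add: block_index_less)
  have "sq_norm (n*n) (\<lambda>p. \<psi> $ p) = (\<Sum>i<n. \<Sum>k<n. (cmod (M i k))^2)"
    by (subst sum_lessThan_mult_split) (intro sum.cong refl, simp add: \<psi>)
  also have "\<dots> = Re (\<Sum>i<n. \<sigma> $$ (i,i))"
    unfolding Re_sum
  proof (rule sum.cong[OF refl])
    fix i assume "i \<in> {..<n}"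
    then have "\<sigma> $$ (i,i) = (\<Sum>k<n. cnj (M i k) * M i k)" using M by (simp add: mult.commute)
    then show "(\<Sum>k<n. (cmod (M i k))^2) = Re (\<sigma> $$ (i,i))" by (simp only: Re_sum Re_cnj_mult_self)
  qed
  also have "(\<Sum>i<n. \<sigma> $$ (i,i)) = 1" using density_mtrace[OF d] cs by (simp add: mtrace_def)
  finally have "pure_state (n*n) (ketbra (n*n) \<psi>)"
    unfolding pure_state_ketbra by (intro bexI[of _ \<psi>] conjI) (auto simp: \<psi>_def)
  moreover have "ptrace_Z n n (ketbra (n*n) \<psi>) = \<sigma>"
  proof (rule eq_matI)
    fix i j assume "i < dim_row \<sigma>" "j < dim_col \<sigma>"
    then have ij: "i < n" "j < n" using cs by auto
    have "ptrace_Z n n (ketbra (n*n) \<psi>) $$ (i,j) = (\<Sum>k<n. M i k * cnj (M j k))"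
      unfolding ptrace_Z_def ketbra_def using ij by (simp, intro sum.cong refl) (simp add: block_index_less \<psi>)
    then show "ptrace_Z n n (ketbra (n*n) \<psi>) $$ (i,j) = \<sigma> $$ (i,j)" using M ij by simp
  qed (use cs in \<open>auto simp: ptrace_Z_def\<close>)
  ultimately show ?thesis using that by blast
qed

section \<open>Eigenvalues of density operators\<close>

lemma upper_triangular_mult:
  assumes A: "A \<in> carrier_mat n n" and B: "B \<in> carrier_mat n n"
    and "upper_triangular A" "upper_triangular B"
  shows "upper_triangular (A * B)"
proof (rule upper_triangularI)
  fix i j assume ji: "j < i" and i: "i < dim_row (A * B)"
  have "A $$ (i,a) * B $$ (a,j) = 0" if "a < n" for a
  proof (cases "a < i")
    case True
    then show ?thesis using assms(3) A i by (simp add: upper_triangularD)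
  next
    case False
    then show ?thesis using assms(4) B ji that by (simp add: upper_triangularD)
  qed
  then show "(A * B) $$ (i,j) = 0"
    using A B ji i by (simp del: index_mult_mat(1) add: index_mult_mat_sum)
qed

lemma upper_triangular_mult_diag:
  assumes A: "A \<in> carrier_mat n n" and B: "B \<in> carrier_mat n n"
    and "upper_triangular A" "upper_triangular B" and i: "i < n"
  shows "(A * B) $$ (i,i) = A $$ (i,i) * B $$ (i,i)"
proof -
  have "(A * B) $$ (i,i) = (\<Sum>a<n. A $$ (i,a) * B $$ (a,i))"
    by (rule index_mult_mat_sum[OF A B i i])
  also have "\<dots> = (\<Sum>a<n. if a = i then A $$ (i,i) * B $$ (i,i) else 0)"
  proof (rule sum.cong[OF refl])
    fix a assume a: "a \<in> {..<n}"
    show "A $$ (i,a) * B $$ (a,i) = (if a = i then A $$ (i,i) * B $$ (i,i) else 0)"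
    proof (cases a i rule: linorder_cases)
      case less
      then show ?thesis using assms(3) A i by (simp add: upper_triangularD)
    next
      case greater
      then show ?thesis using assms(4) B a by (simp add: upper_triangularD)
    qed simp
  qed
  finally show ?thesis using i by simp
qed

lemma upper_triangular_pow_mat:
  assumes B: "B \<in> carrier_mat n n" and ut: "upper_triangular B"
  shows "upper_triangular (B ^\<^sub>m k) \<and> (\<forall>i<n. (B ^\<^sub>m k) $$ (i,i) = (B $$ (i,i))^k)"
proof (induction k)
  case 0
  then show ?case using B by simp
next
  case (Suc k)
  have "B ^\<^sub>m k \<in> carrier_mat n n" using B by simp
  then show ?case
    using Suc upper_triangular_mult[OF _ B _ ut] upper_triangular_mult_diag[OF _ B _ ut]
    by (simp add: power_Suc2 del: power_Suc)
qed

text \<open>Via Schur triangularisation: \<open>A\<^sup>k\<close> is similar to \<open>B\<^sup>k\<close>, whose diagonal is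
  that of \<open>B\<close> raised to the \<open>k\<close>-th power.\<close>

lemma mtrace_pow_mat_char_poly:
  fixes A :: "complex mat"
  assumes A: "A \<in> carrier_mat n n" and cp: "char_poly A = (\<Prod>e \<leftarrow> es. [:- e, 1:])"
  shows "mtrace (A ^\<^sub>m k) = (\<Sum>e \<leftarrow> es. e ^ k)"
proof -
  obtain B P Q where "schur_decomposition A es = (B,P,Q)"
    by (metis prod.exhaust)
  from schur_decomposition[OF A cp this]
  have sim: "similar_mat_wit A B P Q" and ut: "upper_triangular B" and dg: "diag_mat B = es"
    by blast+
  from sim A have B: "B \<in> carrier_mat n n" and P: "P \<in> carrier_mat n n" and Q: "Q \<in> carrier_mat n n"
    and QP: "Q * P = 1\<^sub>m n"
    unfolding similar_mat_wit_def Let_def by auto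
  have len: "length es = n" using dg B unfolding diag_mat_def by auto
  have Bk: "B ^\<^sub>m k \<in> carrier_mat n n" using B by simp
  have "mtrace (A ^\<^sub>m k) = mtrace (P * B ^\<^sub>m k * Q)"
    by (simp add: similar_mat_wit_pow_id[OF sim])
  also have "\<dots> = mtrace (Q * (P * B ^\<^sub>m k))"
    by (rule mtrace_mult_comm) (use P Bk Q in auto)
  also have "Q * (P * B ^\<^sub>m k) = B ^\<^sub>m k"
    using Q P Bk QP by (simp add: assoc_mult_mat[symmetric, of Q n n P n "B ^\<^sub>m k" n] left_mult_one_mat[OF Bk])
  also have "mtrace (B ^\<^sub>m k) = (\<Sum>i<n. (B $$ (i,i)) ^ k)"
    unfolding mtrace_def using upper_triangular_pow_mat[OF B ut] B by simp
  also have "\<dots> = (\<Sum>i<n. (es ! i) ^ k)"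
    using dg B unfolding diag_mat_def by (intro sum.cong refl) auto
  also have "\<dots> = (\<Sum>e \<leftarrow> es. e ^ k)"
    using len by (simp add: sum_list_sum_nth atLeast0LessThan)
  finally show ?thesis .
qed

lemma eigenvalues_desc_mtrace_pow:
  assumes "eigenvalues_desc n A lam"
  shows "mtrace (A ^\<^sub>m k) = complex_of_real (\<Sum>i<n. lam ! i ^ k)"
proof -
  have A: "A \<in> carrier_mat n n" and len: "length lam = n"
    and cp: "char_poly A = (\<Prod>e \<leftarrow> map complex_of_real lam. [:- e, 1:])"
    using assms unfolding eigenvalues_desc_def by blast+
  show ?thesis
    unfolding mtrace_pow_mat_char_poly[OF A cp]
    using len by (simp add: sum_list_sum_nth atLeast0LessThan)
qed

lemma eigenvalues_desc_le_first:
  assumes "eigenvalues_desc n A lam" "i < n"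
  shows "lam ! i \<le> lam ! 0"
  using assms sorted_wrt_nth_less[of "(\<ge>)" lam 0 i] unfolding eigenvalues_desc_def
  by (cases "i = 0") auto

lemma eigenvalues_desc_eigenvector:
  assumes e: "eigenvalues_desc n A lam" and i: "i < n"
  obtains v where "v \<in> carrier_vec n" "v \<noteq> 0\<^sub>v n" "A *\<^sub>v v = complex_of_real (lam ! i) \<cdot>\<^sub>v v"
proof -
  have A: "A \<in> carrier_mat n n" and len: "length lam = n"
    and cp: "char_poly A = (\<Prod>e \<leftarrow> map complex_of_real lam. [:- e, 1:])"
    using e unfolding eigenvalues_desc_def by blast+
  have "poly (char_poly A) (complex_of_real (lam ! i)) = 0"
    unfolding cp poly_prod_list using i len by (auto simp: prod_list_zero_iff)
  then have "eigenvalue A (complex_of_real (lam ! i))" using eigenvalue_root_char_poly[OF A] by simp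
  then show ?thesis using that A unfolding eigenvalue_def eigenvector_def by auto
qed

lemma density_eigenvalue_nonneg:
  assumes d: "density n \<rho>" and e: "eigenvalues_desc n \<rho> lam" and i: "i < n"
  shows "0 \<le> lam ! i"
proof -
  have c: "\<rho> \<in> carrier_mat n n" using density_carrier[OF d] .
  obtain v where v: "v \<in> carrier_vec n" and v0: "v \<noteq> 0\<^sub>v n"
    and ev: "\<rho> *\<^sub>v v = complex_of_real (lam ! i) \<cdot>\<^sub>v v"
    using eigenvalues_desc_eigenvector[OF e i] .
  have row: "(\<Sum>j<n. \<rho> $$ (a,j) * v $ j) = complex_of_real (lam ! i) * v $ a" if "a < n" for a
  proof -
    have "(\<rho> *\<^sub>v v) $ a = (\<Sum>j<n. \<rho> $$ (a,j) * v $ j)"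
      using c v that by (simp add: scalar_prod_def lessThan_atLeast0)
    then show ?thesis using ev v that by simp
  qed
  have "quad_form n (entries \<rho>) (\<lambda>a. v $ a) = (\<Sum>a<n. cnj (v $ a) * (\<Sum>j<n. \<rho> $$ (a,j) * v $ j))"
    unfolding quad_form_def by (simp add: sum_distrib_left mult.assoc)
  also have "\<dots> = (\<Sum>a<n. complex_of_real (lam ! i) * (cnj (v $ a) * v $ a))"
    by (intro sum.cong refl) (simp add: row)
  also have "\<dots> = complex_of_real (lam ! i * sq_norm n (\<lambda>a. v $ a))"
    by (simp only: cnj_mult_self sum_distrib_left[symmetric] of_real_sum of_real_mult)
  finally have "Re (quad_form n (entries \<rho>) (\<lambda>a. v $ a)) = lam ! i * sq_norm n (\<lambda>a. v $ a)"
    by simp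
  moreover have "\<exists>k<n. v $ k \<noteq> 0"
    using v v0 by (metis eq_vecI carrier_vecD index_zero_vec)
  then have "0 < sq_norm n (\<lambda>a. v $ a)"
    by (auto intro: sum_pos2)
  moreover have "0 \<le> Re (quad_form n (entries \<rho>) (\<lambda>a. v $ a))" by (rule density_quad_form(2)[OF d])
  ultimately show ?thesis by (simp add: zero_le_mult_iff)
qed

section \<open>The top eigenvalue bounds the quadratic form\<close>

lemma hermitian_on_mult:
  assumes X: "X \<in> carrier_mat n n" and Y: "Y \<in> carrier_mat n n"
    and "hermitian_on n (entries X)" "hermitian_on n (entries Y)" and XY: "X * Y = Y * X"
  shows "hermitian_on n (entries (X * Y))"
  unfolding hermitian_on_def
proof (intro allI impI)
  fix i j assume ij: "i < n" "j < n"
  have "cnj ((X * Y) $$ (j,i)) = (\<Sum>a<n. cnj (X $$ (j,a)) * cnj (Y $$ (a,i)))"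
    using X Y ij by (simp del: index_mult_mat(1) add: index_mult_mat_sum)
  also have "\<dots> = (\<Sum>a<n. Y $$ (i,a) * X $$ (a,j))"
  proof (rule sum.cong[OF refl])
    fix a assume "a \<in> {..<n}"
    then have "X $$ (a,j) = cnj (X $$ (j,a))" "Y $$ (i,a) = cnj (Y $$ (a,i))"
      using assms(3,4) ij unfolding hermitian_on_def by blast+
    then show "cnj (X $$ (j,a)) * cnj (Y $$ (a,i)) = Y $$ (i,a) * X $$ (a,j)" by simp
  qed
  also have "\<dots> = (X * Y) $$ (i,j)"
    unfolding XY using X Y ij by (simp del: index_mult_mat(1) add: index_mult_mat_sum)
  finally show "(X * Y) $$ (i,j) = cnj ((X * Y) $$ (j,i))" by simp
qed

lemma hermitian_on_pow_mat:
  assumes "A \<in> carrier_mat n n" "hermitian_on n (entries A)"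
  shows "hermitian_on n (entries (A ^\<^sub>m k))"
proof (induction k)
  case 0
  then show ?case using assms(1) by (simp add: hermitian_on_def)
next
  case (Suc k)
  then show ?case
    using assms pow_mat_mult_comm[OF assms(1)] hermitian_on_mult[of "A ^\<^sub>m k" n A] by simp
qed

lemma quad_form_mult_self:
  assumes C: "C \<in> carrier_mat n n" and h: "hermitian_on n (entries C)"
  shows "quad_form n (entries (C * C)) w = complex_of_real (sq_norm n (\<lambda>a. \<Sum>b<n. C $$ (a,b) * w b))"
proof -
  have Cw: "(\<Sum>i<n. cnj (w i) * C $$ (i,a)) = cnj (\<Sum>b<n. C $$ (a,b) * w b)" if "a < n" for a
  proof -
    have "(\<Sum>i<n. cnj (w i) * C $$ (i,a)) = (\<Sum>i<n. cnj (C $$ (a,i) * w i))"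
    proof (rule sum.cong[OF refl])
      fix i assume "i \<in> {..<n}"
      then have "C $$ (i,a) = cnj (C $$ (a,i))" using h that unfolding hermitian_on_def by blast
      then show "cnj (w i) * C $$ (i,a) = cnj (C $$ (a,i) * w i)" by (simp add: mult.commute)
    qed
    then show ?thesis by simp
  qed
  have "quad_form n (entries (C * C)) w = (\<Sum>i<n. \<Sum>j<n. \<Sum>a<n. cnj (w i) * C $$ (i,a) * (C $$ (a,j) * w j))"
    unfolding quad_form_def
  proof (intro sum.cong refl)
    fix i j assume "i \<in> {..<n}" "j \<in> {..<n}"
    then have "(C * C) $$ (i,j) = (\<Sum>a<n. C $$ (i,a) * C $$ (a,j))"
      using C by (intro index_mult_mat_sum) auto
    then show "cnj (w i) * (C * C) $$ (i,j) * w j = (\<Sum>a<n. cnj (w i) * C $$ (i,a) * (C $$ (a,j) * w j))"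
      by (simp add: sum_distrib_left sum_distrib_right mult_ac)
  qed
  also have "\<dots> = (\<Sum>a<n. \<Sum>i<n. \<Sum>j<n. cnj (w i) * C $$ (i,a) * (C $$ (a,j) * w j))"
    by (subst sum.swap) (rule sum.cong[OF refl], rule sum.swap)
  also have "\<dots> = (\<Sum>a<n. (\<Sum>i<n. cnj (w i) * C $$ (i,a)) * (\<Sum>j<n. C $$ (a,j) * w j))"
    by (simp only: sum_product)
  also have "\<dots> = (\<Sum>a<n. cnj (\<Sum>b<n. C $$ (a,b) * w b) * (\<Sum>b<n. C $$ (a,b) * w b))"
    by (intro sum.cong refl) (simp add: Cw)
  finally show ?thesis by (simp only: cnj_mult_self of_real_sum)
qed

context
  fixes C :: "complex mat" and n :: nat and w :: "nat \<Rightarrow> complex"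
  assumes C: "C \<in> carrier_mat n n" and h: "hermitian_on n (entries C)" and w: "sq_norm n w = 1"
begin

lemma Re_quad_form_sq_le:
  "(Re (quad_form n (entries C) w))^2 \<le> Re (quad_form n (entries (C * C)) w)"
proof -
  have q: "quad_form n (entries C) w = (\<Sum>a<n. cnj (w a) * (\<Sum>b<n. C $$ (a,b) * w b))"
    unfolding quad_form_def by (simp add: sum_distrib_left mult.assoc)
  have "(Re (quad_form n (entries C) w))^2 \<le> (cmod (quad_form n (entries C) w))^2"
    by (metis abs_Re_le_cmod abs_ge_zero power2_abs power_mono)
  also have "\<dots> \<le> sq_norm n (\<lambda>a. \<Sum>b<n. C $$ (a,b) * w b)"
    unfolding q by (rule cmod_sum_cnj_mult_sq_le[OF w])
  also have "\<dots> = Re (quad_form n (entries (C * C)) w)"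
    by (simp add: quad_form_mult_self[OF C h])
  finally show ?thesis .
qed

lemma Re_quad_form_mult_self_le_mtrace:
  "Re (quad_form n (entries (C * C)) w) \<le> Re (mtrace (C * C))"
proof -
  have "Re (quad_form n (entries (C * C)) w) = (\<Sum>a<n. (cmod (\<Sum>b<n. cnj (w b) * cnj (C $$ (a,b))))^2)"
  proof -
    have "cmod (\<Sum>b<n. C $$ (a,b) * w b) = cmod (\<Sum>b<n. cnj (w b) * cnj (C $$ (a,b)))" for a
      by (subst complex_mod_cnj[symmetric]) (simp add: mult.commute)
    then show ?thesis unfolding quad_form_mult_self[OF C h] Re_complex_of_real by simp
  qed
  also have "\<dots> \<le> (\<Sum>a<n. sq_norm n (\<lambda>b. cnj (C $$ (a,b))))"
    by (intro sum_mono cmod_sum_cnj_mult_sq_le[OF w])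
  also have "\<dots> = Re (\<Sum>a<n. \<Sum>b<n. cnj (C $$ (a,b)) * C $$ (a,b))"
    by (simp only: Re_sum Re_cnj_mult_self complex_mod_cnj)
  also have "(\<Sum>a<n. \<Sum>b<n. cnj (C $$ (a,b)) * C $$ (a,b)) = (\<Sum>a<n. (C * C) $$ (a,a))"
  proof (rule sum.cong[OF refl])
    fix a assume a: "a \<in> {..<n}"
    have "(\<Sum>b<n. cnj (C $$ (a,b)) * C $$ (a,b)) = (\<Sum>b<n. C $$ (a,b) * C $$ (b,a))"
    proof (rule sum.cong[OF refl])
      fix b assume "b \<in> {..<n}"
      then have "C $$ (b,a) = cnj (C $$ (a,b))" using h a unfolding hermitian_on_def by blast
      then show "cnj (C $$ (a,b)) * C $$ (a,b) = C $$ (a,b) * C $$ (b,a)" by simp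
    qed
    also have "\<dots> = (C * C) $$ (a,a)" using C a by (simp del: index_mult_mat(1) add: index_mult_mat_sum)
    finally show "(\<Sum>b<n. cnj (C $$ (a,b)) * C $$ (a,b)) = (C * C) $$ (a,a)" .
  qed
  also have "\<dots> = mtrace (C * C)" unfolding mtrace_def using C by simp
  finally show ?thesis .
qed

end

lemma le_of_two_pow_bound:
  fixes x c K :: real
  assumes x: "0 \<le> x" and c: "0 \<le> c" and bound: "\<And>j. x ^ (2^Suc j) \<le> K * c ^ (2^Suc j)"
  shows "x \<le> c"
proof (rule ccontr)
  assume "\<not> x \<le> c"
  then have xc: "c < x" by simp
  show False
  proof (cases "c = 0")
    case True
    then show False using bound[of 0] xc by simp
  next
    case False
    then have c0: "0 < c" using c by simp
    define d where "d = x / c - 1"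
    have d0: "0 < d" using xc c0 unfolding d_def by (simp add: field_simps)
    obtain j :: nat where j: "K < real j * d" using reals_Archimedean3[OF d0] by blast
    define N :: nat where "N = 2^Suc j"
    have "j < 2^j" by (rule less_exp)
    then have "j \<le> N" unfolding N_def power_Suc by linarith
    then have "real j * d \<le> real N * d" using d0 by simp
    also have "\<dots> < 1 + real N * d" by simp
    also have "\<dots> \<le> (1 + d) ^ N" by (rule Bernoulli_inequality) (use d0 in simp)
    also have "\<dots> = x ^ N / c ^ N" unfolding d_def by (simp add: power_divide)
    also have "\<dots> \<le> K" using bound[of j] c0 unfolding N_def by (simp add: divide_le_eq)
    finally show False using j by simp
  qed
qed

lemma pow_mat_two_pow_Suc:
  assumes "A \<in> carrier_mat n n"
  shows "A ^\<^sub>m (2^Suc j) = A ^\<^sub>m (2^j) * A ^\<^sub>m (2^j)"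
  using pow_mat_add[OF assms, of "2^j" "2^j"] by (simp add: mult_2)

lemma Re_quad_form_two_pow_le:
  assumes C: "C \<in> carrier_mat n n" and h: "hermitian_on n (entries C)" and w: "sq_norm n w = 1"
    and nonneg: "0 \<le> Re (quad_form n (entries C) w)"
  shows "(Re (quad_form n (entries C) w)) ^ (2^j) \<le> Re (quad_form n (entries (C ^\<^sub>m (2^j))) w)"
proof (induction j)
  case 0
  then show ?case using C by simp
next
  case (Suc j)
  have "(Re (quad_form n (entries C) w)) ^ (2^Suc j) = ((Re (quad_form n (entries C) w)) ^ (2^j))^2"
    by (simp add: power_mult[symmetric] mult.commute)
  also have "\<dots> \<le> (Re (quad_form n (entries (C ^\<^sub>m (2^j))) w))^2"
    by (rule power_mono) (use Suc nonneg in auto)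
  also have "\<dots> \<le> Re (quad_form n (entries (C ^\<^sub>m (2^Suc j))) w)"
    unfolding pow_mat_two_pow_Suc[OF C]
    by (rule Re_quad_form_sq_le) (use C hermitian_on_pow_mat[OF C h] w in simp_all)
  finally show ?case .
qed

text \<open>The Rayleigh bound by the top eigenvalue, proved without diagonalising \<open>\<rho>\<close>:
  \<open>\<langle>w, \<rho> w\<rangle>^(2^j) \<le> \<langle>w, \<rho>^(2^j) w\<rangle> \<le> tr \<rho>^(2^j) \<le> n \<lambda>\<^sub>1^(2^j)\<close> for all \<open>j\<close>.\<close>

lemma density_quad_form_le_top_eigenvalue_unit:
  assumes d: "density n \<rho>" and e: "eigenvalues_desc n \<rho> lam" and w: "sq_norm n w = 1"
  shows "Re (quad_form n (entries \<rho>) w) \<le> lam ! 0"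
proof -
  have c: "\<rho> \<in> carrier_mat n n" and h: "hermitian_on n (entries \<rho>)"
    using density_carrier[OF d] density_hermitian[OF d] .
  have x0: "0 \<le> Re (quad_form n (entries \<rho>) w)" by (rule density_quad_form(2)[OF d])
  have l0: "0 \<le> lam ! 0"
    using density_eigenvalue_nonneg[OF d e] density_dim_pos[OF d] by blast
  have bound: "(Re (quad_form n (entries \<rho>) w)) ^ (2^Suc j) \<le> real n * (lam ! 0) ^ (2^Suc j)" for j
  proof -
    note Re_quad_form_two_pow_le[OF c h w x0, of "Suc j"]
    also have "Re (quad_form n (entries (\<rho> ^\<^sub>m (2^Suc j))) w) \<le> Re (mtrace (\<rho> ^\<^sub>m (2^Suc j)))"
      unfolding pow_mat_two_pow_Suc[OF c]
      by (rule Re_quad_form_mult_self_le_mtrace) (use c hermitian_on_pow_mat[OF c h] w in simp_all)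
    also have "\<dots> = (\<Sum>i<n. lam ! i ^ (2^Suc j))"
      unfolding eigenvalues_desc_mtrace_pow[OF e] by simp
    also have "\<dots> \<le> (\<Sum>i<n. (lam ! 0) ^ (2^Suc j))"
      using density_eigenvalue_nonneg[OF d e] eigenvalues_desc_le_first[OF e]
      by (intro sum_mono power_mono) auto
    finally show ?thesis by simp
  qed
  show ?thesis by (rule le_of_two_pow_bound[OF x0 l0 bound])
qed

lemma density_quad_form_le_top_eigenvalue:
  assumes d: "density n \<rho>" and e: "eigenvalues_desc n \<rho> lam"
  shows "Re (quad_form n (entries \<rho>) w) \<le> lam ! 0 * sq_norm n w"
proof (cases "sq_norm n w = 0")
  case True
  then have "\<forall>i<n. w i = 0" by (simp add: sum_nonneg_eq_0_iff)
  then have "quad_form n (entries \<rho>) w = 0" unfolding quad_form_def by simp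
  then show ?thesis using True by simp
next
  case False
  define s where "s = sq_norm n w"
  have s0: "0 < s" using False unfolding s_def by (simp add: sum_nonneg order_le_neq_trans)
  define r where "r = complex_of_real (sqrt s)"
  have r0: "r \<noteq> 0" and rr: "cnj r * r = complex_of_real s" and "cmod r ^ 2 = s"
    unfolding r_def using s0 by (simp_all flip: of_real_mult)
  have "sq_norm n (\<lambda>i. w i / r) = 1"
    using s0 \<open>cmod r ^ 2 = s\<close> by (simp add: norm_divide power_divide sum_divide_distrib[symmetric] s_def)
  then have "Re (quad_form n (entries \<rho>) (\<lambda>i. w i / r)) \<le> lam ! 0"
    by (rule density_quad_form_le_top_eigenvalue_unit[OF d e])
  moreover have "quad_form n (entries \<rho>) (\<lambda>i. w i / r) = quad_form n (entries \<rho>) w / (cnj r * r)"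
    unfolding quad_form_def by (simp add: sum_divide_distrib)
  ultimately show ?thesis
    using s0 unfolding rr s_def[symmetric] by (simp add: Re_divide_of_real divide_le_eq mult.commute)
qed

section \<open>Erasure and unitary channels on a pure state\<close>

lemma ketbra_carrier_mat [simp]: "ketbra d \<psi> \<in> carrier_mat d d"
  and ketbra_index [simp]: "i < d \<Longrightarrow> j < d \<Longrightarrow> ketbra d \<psi> $$ (i,j) = \<psi> $ i * cnj (\<psi> $ j)"
  unfolding ketbra_def by simp_all

lemma quad_form_cong:
  assumes "\<And>i j. i < n \<Longrightarrow> j < n \<Longrightarrow> S i j = S' i j" "\<And>i. i < n \<Longrightarrow> v i = v' i"
  shows "quad_form n S v = quad_form n S' v'"
  unfolding quad_form_def using assms by (intro sum.cong refl) simp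

lemma mtrace_mult_ketbra:
  assumes "A \<in> carrier_mat d d"
  shows "mtrace (A * ketbra d \<phi>) = quad_form d (entries A) (\<lambda>i. \<phi> $ i)"
proof -
  have "mtrace (A * ketbra d \<phi>) = (\<Sum>i<d. \<Sum>j<d. A $$ (i,j) * (\<phi> $ j * cnj (\<phi> $ i)))"
    unfolding mtrace_def using assms
    by (simp, intro sum.cong refl) (simp del: index_mult_mat(1) add: index_mult_mat_sum[OF assms ketbra_carrier_mat])
  then show ?thesis unfolding quad_form_def by (simp add: mult_ac)
qed

lemma mtrace_ketbra_sq:
  "mtrace (ketbra d \<phi> * ketbra d \<phi>) = complex_of_real ((sq_norm d (\<lambda>i. \<phi> $ i))^2)"
proof -
  have "mtrace (ketbra d \<phi> * ketbra d \<phi>) = (\<Sum>i<d. cnj (\<phi> $ i) * \<phi> $ i) * (\<Sum>j<d. cnj (\<phi> $ j) * \<phi> $ j)"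
    unfolding mtrace_mult_ketbra[OF ketbra_carrier_mat] quad_form_def sum_product
    by (intro sum.cong refl) (simp add: mult_ac)
  then show ?thesis by (simp add: cnj_mult_self power2_eq_square)
qed

lemma sq_norm_unitary_mult:
  assumes "unitary n U"
  shows "sq_norm n (\<lambda>i. \<Sum>a<n. U $$ (i,a) * x a) = sq_norm n x"
proof -
  have U: "U \<in> carrier_mat n n" and UU: "adj U * U = 1\<^sub>m n" using assms unfolding unitary_def by blast+
  have orth: "(\<Sum>i<n. cnj (U $$ (i,a)) * U $$ (i,b)) = (if a = b then 1 else 0)" if "a < n" "b < n" for a b
  proof -
    have "(\<Sum>i<n. cnj (U $$ (i,a)) * U $$ (i,b)) = (adj U * U) $$ (a,b)"
      using U that by (simp del: index_mult_mat(1) add: index_mult_mat_sum[of "adj U" n n U n] adj_index)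
    then show ?thesis unfolding UU using that by simp
  qed
  have "(\<Sum>i<n. cnj (\<Sum>a<n. U $$ (i,a) * x a) * (\<Sum>b<n. U $$ (i,b) * x b))
      = (\<Sum>i<n. \<Sum>a<n. \<Sum>b<n. cnj (x a) * x b * (cnj (U $$ (i,a)) * U $$ (i,b)))"
    unfolding cnj_sum sum_product by (intro sum.cong refl) (simp add: mult_ac)
  also have "\<dots> = (\<Sum>a<n. \<Sum>b<n. cnj (x a) * x b * (\<Sum>i<n. cnj (U $$ (i,a)) * U $$ (i,b)))"
    by (subst sum.swap, rule sum.cong[OF refl], subst sum.swap) (simp add: sum_distrib_left)
  also have "\<dots> = (\<Sum>a<n. cnj (x a) * x a)"
    by (intro sum.cong refl) (simp add: orth if_distrib cong: if_cong)
  finally have "complex_of_real (sq_norm n (\<lambda>i. \<Sum>a<n. U $$ (i,a) * x a)) = complex_of_real (sq_norm n x)"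
    by (simp only: of_real_sum cnj_mult_self[symmetric])
  then show ?thesis by (simp only: of_real_eq_iff)
qed

lemma quad_form_kron:
  "quad_form (n*m) (\<lambda>p q. T (p mod m) (q mod m) * X (p div m) (q div m)) v
     = (\<Sum>i<n. \<Sum>j<n. X i j * (\<Sum>k<m. \<Sum>l<m. cnj (v (i*m+k)) * T k l * v (j*m+l)))"
proof -
  have "quad_form (n*m) (\<lambda>p q. T (p mod m) (q mod m) * X (p div m) (q div m)) v
      = (\<Sum>i<n. \<Sum>k<m. \<Sum>j<n. \<Sum>l<m. X i j * (cnj (v (i*m+k)) * T k l * v (j*m+l)))"
    unfolding quad_form_def
    by (subst sum_lessThan_mult_split, (rule sum.cong[OF refl])+, subst sum_lessThan_mult_split,
        (rule sum.cong[OF refl])+) (simp add: mult_ac)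
  also have "\<dots> = (\<Sum>i<n. \<Sum>j<n. \<Sum>k<m. \<Sum>l<m. X i j * (cnj (v (i*m+k)) * T k l * v (j*m+l)))"
    by (rule sum.cong[OF refl], rule sum.swap)
  finally show ?thesis by (simp add: sum_distrib_left)
qed

lemma ptrace_Z_ketbra_index:
  assumes "i < n" "j < n"
  shows "ptrace_Z n m (ketbra (n*m) \<psi>) $$ (i,j) = (\<Sum>k<m. \<psi> $ (i*m+k) * cnj (\<psi> $ (j*m+k)))"
  unfolding ptrace_Z_def using assms by (simp, intro sum.cong refl) (simp add: block_index_less)

lemma ext_channel_erasure_ketbra_index:
  assumes "\<xi> \<in> carrier_mat n n" "p < n*m" "q < n*m"
  shows "ext_channel (\<lambda>A. mtrace A \<cdot>\<^sub>m \<xi>) n m (ketbra (n*m) \<psi>) $$ (p,q)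
    = (\<Sum>a<n. \<psi> $ (a*m + p mod m) * cnj (\<psi> $ (a*m + q mod m))) * \<xi> $$ (p div m, q div m)"
proof -
  have "mtrace (mat n n (\<lambda>(i,j). ketbra (n*m) \<psi> $$ (i*m + p mod m, j*m + q mod m)))
      = (\<Sum>a<n. \<psi> $ (a*m + p mod m) * cnj (\<psi> $ (a*m + q mod m)))"
    unfolding mtrace_def using block_index_split assms
    by (simp, intro sum.cong refl) (simp add: block_index_less)
  then show ?thesis
    unfolding ext_channel_def using assms block_index_split by simp
qed

lemma mult_rank_one_mult_adj:
  assumes U: "U \<in> carrier_mat n n"
  shows "U * mat n n (\<lambda>(a,b). x a * cnj (y b)) * adj U
    = mat n n (\<lambda>(i,j). (\<Sum>a<n. U $$ (i,a) * x a) * cnj (\<Sum>b<n. U $$ (j,b) * y b))"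
proof (rule eq_matI)
  fix i j assume "i < dim_row (mat n n (\<lambda>(i,j). (\<Sum>a<n. U $$ (i,a) * x a) * cnj (\<Sum>b<n. U $$ (j,b) * y b)))"
    "j < dim_col (mat n n (\<lambda>(i,j). (\<Sum>a<n. U $$ (i,a) * x a) * cnj (\<Sum>b<n. U $$ (j,b) * y b)))"
  then have ij: "i < n" "j < n" by simp_all
  define B where "B = mat n n (\<lambda>(a,b). x a * cnj (y b))"
  have B: "B \<in> carrier_mat n n" unfolding B_def by simp
  have "(U * B * adj U) $$ (i,j) = (\<Sum>b<n. (U * B) $$ (i,b) * cnj (U $$ (j,b)))"
    using U B ij by (simp del: index_mult_mat(1) add: index_mult_mat_sum[of "U * B" n n "adj U" n] adj_index)
  also have "\<dots> = (\<Sum>b<n. (\<Sum>a<n. U $$ (i,a) * x a) * (cnj (y b) * cnj (U $$ (j,b))))"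
  proof (rule sum.cong[OF refl])
    fix b assume "b \<in> {..<n}"
    then have "(U * B) $$ (i,b) = (\<Sum>a<n. U $$ (i,a) * (x a * cnj (y b)))"
      using index_mult_mat_sum[OF U B ij(1)] unfolding B_def by simp
    then show "(U * B) $$ (i,b) * cnj (U $$ (j,b)) = (\<Sum>a<n. U $$ (i,a) * x a) * (cnj (y b) * cnj (U $$ (j,b)))"
      by (simp add: sum_distrib_right sum_distrib_left mult_ac)
  qed
  also have "\<dots> = (\<Sum>a<n. U $$ (i,a) * x a) * cnj (\<Sum>b<n. U $$ (j,b) * y b)"
    by (simp add: sum_distrib_left mult.commute)
  finally show "(U * mat n n (\<lambda>(a,b). x a * cnj (y b)) * adj U) $$ (i,j)
    = mat n n (\<lambda>(i,j). (\<Sum>a<n. U $$ (i,a) * x a) * cnj (\<Sum>b<n. U $$ (j,b) * y b)) $$ (i,j)"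
    using ij unfolding B_def by simp
qed (use U in \<open>simp_all add: adj_def\<close>)

lemma ext_channel_unitary_ketbra:
  assumes U: "U \<in> carrier_mat n n"
  shows "ext_channel (\<lambda>A. U * A * adj U) n m (ketbra (n*m) \<psi>)
    = ketbra (n*m) (vec (n*m) (\<lambda>p. \<Sum>a<n. U $$ (p div m, a) * \<psi> $ (a*m + p mod m)))"
proof (rule eq_matI)
  fix p q assume "p < dim_row (ketbra (n*m) (vec (n*m) (\<lambda>p. \<Sum>a<n. U $$ (p div m, a) * \<psi> $ (a*m + p mod m))))"
    "q < dim_col (ketbra (n*m) (vec (n*m) (\<lambda>p. \<Sum>a<n. U $$ (p div m, a) * \<psi> $ (a*m + p mod m))))"
  then have pq: "p < n*m" "q < n*m" by (simp_all add: ketbra_def)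
  have "mat n n (\<lambda>(a,b). ketbra (n*m) \<psi> $$ (a*m + p mod m, b*m + q mod m))
      = mat n n (\<lambda>(a,b). \<psi> $ (a*m + p mod m) * cnj (\<psi> $ (b*m + q mod m)))"
    using block_index_split[OF pq(1)] block_index_split[OF pq(2)] by (auto simp: block_index_less)
  then have "ext_channel (\<lambda>A. U * A * adj U) n m (ketbra (n*m) \<psi>) $$ (p,q)
      = (U * mat n n (\<lambda>(a,b). \<psi> $ (a*m + p mod m) * cnj (\<psi> $ (b*m + q mod m))) * adj U) $$ (p div m, q div m)"
    unfolding ext_channel_def using pq by simp
  also have "\<dots> = ketbra (n*m) (vec (n*m) (\<lambda>p. \<Sum>a<n. U $$ (p div m, a) * \<psi> $ (a*m + p mod m))) $$ (p,q)"
    using pq block_index_split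
    by (simp add: mult_rank_one_mult_adj[OF U, of "\<lambda>a. \<psi> $ (a*m + p mod m)" "\<lambda>b. \<psi> $ (b*m + q mod m)"])
  finally show "ext_channel (\<lambda>A. U * A * adj U) n m (ketbra (n*m) \<psi>) $$ (p,q)
    = ketbra (n*m) (vec (n*m) (\<lambda>p. \<Sum>a<n. U $$ (p div m, a) * \<psi> $ (a*m + p mod m))) $$ (p,q)" .
qed (simp_all add: ext_channel_def ketbra_def)

lemma adj_mult:
  assumes A: "A \<in> carrier_mat n k" and B: "B \<in> carrier_mat k m"
  shows "adj (A * B) = adj B * adj A"
proof (rule eq_matI)
  fix i j assume "i < dim_row (adj B * adj A)" "j < dim_col (adj B * adj A)"
  then have ij: "i < m" "j < n" using A B by (simp_all add: adj_def)
  have "adj (A * B) $$ (i,j) = (\<Sum>a<k. cnj (A $$ (j,a)) * cnj (B $$ (a,i)))"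
    using A B ij by (simp del: index_mult_mat(1) add: adj_index[of "A * B" n m] index_mult_mat_sum[OF A B])
  also have "\<dots> = (adj B * adj A) $$ (i,j)"
    using A B ij by (simp del: index_mult_mat(1) add: adj_index index_mult_mat_sum[of "adj B" m k "adj A" n] mult.commute)
  finally show "adj (A * B) $$ (i,j) = (adj B * adj A) $$ (i,j)" .
qed (use A B in \<open>simp_all add: adj_def\<close>)

lemma mtrace_adj_mult_mult:
  assumes W: "W \<in> carrier_mat n k" and X: "X \<in> carrier_mat n n"
  shows "mtrace (adj W * X * W) = (\<Sum>a<k. quad_form n (entries X) (\<lambda>i. W $$ (i,a)))"
proof -
  have dim: "dim_row (adj W * X * W) = k" using W by (simp add: adj_def)
  have "(adj W * X * W) $$ (a,a) = quad_form n (entries X) (\<lambda>i. W $$ (i,a))" if a: "a < k" for a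
  proof -
    have W': "adj W \<in> carrier_mat k n" using W by simp
    have WX: "adj W * X \<in> carrier_mat k n" using W' X by (rule mult_carrier_mat)
    have "(adj W * X * W) $$ (a,a) = (\<Sum>j<n. (adj W * X) $$ (a,j) * W $$ (j,a))"
      by (rule index_mult_mat_sum[OF WX W a a])
    also have "\<dots> = (\<Sum>j<n. (\<Sum>i<n. cnj (W $$ (i,a)) * X $$ (i,j)) * W $$ (j,a))"
      using a by (intro sum.cong refl) (simp add: index_mult_mat_sum[OF W' X] adj_index[OF W])
    also have "\<dots> = (\<Sum>i<n. \<Sum>j<n. cnj (W $$ (i,a)) * X $$ (i,j) * W $$ (j,a))"
      by (subst sum.swap) (simp add: sum_distrib_right)
    finally show ?thesis unfolding quad_form_def .
  qed
  then show ?thesis unfolding mtrace_def dim by simp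
qed

lemma mtrace_unitary_ketbra_sq:
  assumes U: "unitary n U" and \<psi>: "sq_norm (n*m) (\<lambda>p. \<psi> $ p) = 1"
  defines "\<rho> \<equiv> ext_channel (\<lambda>A. U * A * adj U) n m (ketbra (n*m) \<psi>)"
  shows "mtrace (\<rho> * \<rho>) = 1"
proof -
  define \<phi> where "\<phi> = vec (n*m) (\<lambda>p. \<Sum>a<n. U $$ (p div m, a) * \<psi> $ (a*m + p mod m))"
  have "\<rho> = ketbra (n*m) \<phi>"
    unfolding \<rho>_def \<phi>_def by (rule ext_channel_unitary_ketbra) (use U in \<open>simp add: unitary_def\<close>)
  moreover have "sq_norm (n*m) (\<lambda>p. \<phi> $ p) = 1"
  proof -
    have "sq_norm (n*m) (\<lambda>p. \<phi> $ p) = (\<Sum>i<n. \<Sum>k<m. (cmod (\<Sum>a<n. U $$ (i,a) * \<psi> $ (a*m + k)))^2)"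
      unfolding \<phi>_def by (subst sum_lessThan_mult_split) (intro sum.cong refl, simp add: block_index_less)
    also have "\<dots> = (\<Sum>k<m. sq_norm n (\<lambda>i. \<Sum>a<n. U $$ (i,a) * \<psi> $ (a*m + k)))"
      by (rule sum.swap)
    also have "\<dots> = (\<Sum>k<m. \<Sum>a<n. (cmod (\<psi> $ (a*m + k)))^2)"
      by (simp only: sq_norm_unitary_mult[OF U])
    also have "\<dots> = sq_norm (n*m) (\<lambda>p. \<psi> $ p)"
      by (subst sum_lessThan_mult_split) (rule sum.swap)
    finally show ?thesis using \<psi> by simp
  qed
  ultimately show ?thesis by (simp add: mtrace_ketbra_sq)
qed

lemma mtrace_erasure_mult_ketbra:
  assumes \<xi>: "\<xi> \<in> carrier_mat n n"
  shows "mtrace (ext_channel (\<lambda>A. mtrace A \<cdot>\<^sub>m \<xi>) n m (ketbra (n*m) \<psi>)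
               * ketbra (n*m) (vec (n*m) (\<lambda>p. \<phi> (p div m) (p mod m))))
    = (\<Sum>i<n. \<Sum>j<n. \<xi> $$ (i,j) *
         (\<Sum>k<m. \<Sum>l<m. cnj (\<phi> i k) * (\<Sum>a<n. \<psi> $ (a*m+k) * cnj (\<psi> $ (a*m+l))) * \<phi> j l))"
proof -
  define \<tau> where "\<tau> = (\<lambda>k l. \<Sum>a<n. \<psi> $ (a*m+k) * cnj (\<psi> $ (a*m+l)))"
  define \<rho> where "\<rho> = ext_channel (\<lambda>A. mtrace A \<cdot>\<^sub>m \<xi>) n m (ketbra (n*m) \<psi>)"
  have \<rho>: "\<rho> \<in> carrier_mat (n*m) (n*m)" unfolding \<rho>_def ext_channel_def by simp
  have "mtrace (\<rho> * ketbra (n*m) (vec (n*m) (\<lambda>p. \<phi> (p div m) (p mod m))))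
      = quad_form (n*m) (entries \<rho>) (\<lambda>p. vec (n*m) (\<lambda>p. \<phi> (p div m) (p mod m)) $ p)"
    by (rule mtrace_mult_ketbra[OF \<rho>])
  also have "\<dots> = quad_form (n*m) (\<lambda>p q. \<tau> (p mod m) (q mod m) * \<xi> $$ (p div m, q div m))
      (\<lambda>p. \<phi> (p div m) (p mod m))"
    by (rule quad_form_cong) (simp_all add: \<rho>_def ext_channel_erasure_ketbra_index[OF \<xi>] \<tau>_def)
  also have "\<dots> = (\<Sum>i<n. \<Sum>j<n. \<xi> $$ (i,j) * (\<Sum>k<m. \<Sum>l<m. cnj (\<phi> i k) * \<tau> k l * \<phi> j l))"
    unfolding quad_form_kron[where X = "entries \<xi>" and T = \<tau>] by (intro sum.cong refl) simp
  finally show ?thesis unfolding \<rho>_def \<tau>_def .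
qed

lemma mult_ptrace_Z_ketbra_index:
  assumes U: "U \<in> carrier_mat n n" and "i < n" "a < n"
  shows "(U * ptrace_Z n m (ketbra (n*m) \<psi>)) $$ (i,a)
    = (\<Sum>l<m. (\<Sum>b<n. U $$ (i,b) * \<psi> $ (b*m+l)) * cnj (\<psi> $ (a*m+l)))"
proof -
  have \<sigma>: "ptrace_Z n m (ketbra (n*m) \<psi>) \<in> carrier_mat n n" unfolding ptrace_Z_def by simp
  have "(U * ptrace_Z n m (ketbra (n*m) \<psi>)) $$ (i,a)
      = (\<Sum>b<n. \<Sum>l<m. U $$ (i,b) * \<psi> $ (b*m+l) * cnj (\<psi> $ (a*m+l)))"
    unfolding index_mult_mat_sum[OF U \<sigma> assms(2,3)] using assms(3)
    by (intro sum.cong refl) (simp add: ptrace_Z_ketbra_index sum_distrib_left mult.assoc)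
  also have "\<dots> = (\<Sum>l<m. (\<Sum>b<n. U $$ (i,b) * \<psi> $ (b*m+l)) * cnj (\<psi> $ (a*m+l)))"
    by (subst sum.swap) (simp add: sum_distrib_right)
  finally show ?thesis .
qed

text \<open>With \<open>P a k = \<psi>\<^sub>a\<^sub>m\<^sub>+\<^sub>k\<close>, the partial trace is \<open>\<sigma> = P P\<^sup>\<dagger>\<close> and the two channel
  outputs are \<open>\<xi> \<otimes> P\<^sup>T (conj P)\<close> and the projector onto \<open>vec (U P)\<close>; both sides below
  reduce to \<open>\<Sum>\<^sub>i\<^sub>j \<xi>\<^sub>i\<^sub>j (U P P\<^sup>\<dagger> P P\<^sup>\<dagger> U\<^sup>\<dagger>)\<^sub>j\<^sub>i\<close>.\<close>

lemma mtrace_erasure_unitary_ketbra: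
  assumes \<xi>: "\<xi> \<in> carrier_mat n n" and U: "U \<in> carrier_mat n n"
    and \<sigma>: "ptrace_Z n m (ketbra (n*m) \<psi>) = \<sigma>"
  shows "mtrace (ext_channel (\<lambda>A. mtrace A \<cdot>\<^sub>m \<xi>) n m (ketbra (n*m) \<psi>)
               * ext_channel (\<lambda>A. U * A * adj U) n m (ketbra (n*m) \<psi>))
       = mtrace (adj (U * \<sigma>) * \<xi> * (U * \<sigma>))"
proof -
  define P where "P = (\<lambda>a k. \<psi> $ (a*m + k))"
  define \<phi> where "\<phi> = (\<lambda>i k. \<Sum>b<n. U $$ (i,b) * P b k)"
  define W where "W = U * \<sigma>"
  have W: "W \<in> carrier_mat n n" unfolding W_def \<sigma>[symmetric] ptrace_Z_def using U by simp
  have W_index: "W $$ (i,a) = (\<Sum>l<m. \<phi> i l * cnj (P a l))" if "i < n" "a < n" for i a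
    unfolding W_def \<sigma>[symmetric] mult_ptrace_Z_ketbra_index[OF U that] \<phi>_def P_def ..
  have gram: "(\<Sum>a<n. cnj (W $$ (i,a)) * W $$ (j,a))
      = (\<Sum>k<m. \<Sum>l<m. cnj (\<phi> i k) * (\<Sum>a<n. P a k * cnj (P a l)) * \<phi> j l)" if "i < n" "j < n" for i j
  proof -
    have "(\<Sum>a<n. cnj (W $$ (i,a)) * W $$ (j,a))
        = (\<Sum>a<n. \<Sum>k<m. \<Sum>l<m. cnj (\<phi> i k) * \<phi> j l * (P a k * cnj (P a l)))"
      using that by (intro sum.cong refl) (simp add: W_index sum_product mult_ac)
    also have "\<dots> = (\<Sum>k<m. \<Sum>l<m. cnj (\<phi> i k) * (\<Sum>a<n. P a k * cnj (P a l)) * \<phi> j l)"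
      by (subst sum.swap, rule sum.cong[OF refl], subst sum.swap) (simp add: sum_distrib_left mult_ac)
    finally show ?thesis .
  qed
  have "ext_channel (\<lambda>A. U * A * adj U) n m (ketbra (n*m) \<psi>)
      = ketbra (n*m) (vec (n*m) (\<lambda>p. \<phi> (p div m) (p mod m)))"
    unfolding \<phi>_def P_def by (rule ext_channel_unitary_ketbra[OF U])
  then have "mtrace (ext_channel (\<lambda>A. mtrace A \<cdot>\<^sub>m \<xi>) n m (ketbra (n*m) \<psi>)
               * ext_channel (\<lambda>A. U * A * adj U) n m (ketbra (n*m) \<psi>))
      = (\<Sum>i<n. \<Sum>j<n. \<xi> $$ (i,j) * (\<Sum>a<n. cnj (W $$ (i,a)) * W $$ (j,a)))"
    by (simp add: mtrace_erasure_mult_ketbra[OF \<xi>] gram P_def)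
  also have "\<dots> = (\<Sum>a<n. \<Sum>i<n. \<Sum>j<n. cnj (W $$ (i,a)) * \<xi> $$ (i,j) * W $$ (j,a))"
    by (simp add: sum_distrib_left mult_ac, subst sum.swap, rule sum.cong[OF refl], rule sum.swap)
  also have "\<dots> = mtrace (adj W * \<xi> * W)"
    unfolding mtrace_adj_mult_mult[OF W \<xi>] quad_form_def ..
  finally show ?thesis unfolding W_def .
qed

lemma superfidelity_erasure_unitary_ketbra:
  assumes \<xi>: "\<xi> \<in> carrier_mat n n" and U: "unitary n U"
    and \<psi>: "sq_norm (n*m) (\<lambda>p. \<psi> $ p) = 1" and \<sigma>: "ptrace_Z n m (ketbra (n*m) \<psi>) = \<sigma>"
  shows "superfidelity (ext_channel (\<lambda>A. mtrace A \<cdot>\<^sub>m \<xi>) n m (ketbra (n*m) \<psi>))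
                       (ext_channel (\<lambda>A. U * A * adj U) n m (ketbra (n*m) \<psi>))
       = Re (mtrace (adj (U * \<sigma>) * \<xi> * (U * \<sigma>)))"
proof -
  have "U \<in> carrier_mat n n" using U unfolding unitary_def by blast
  then show ?thesis
    unfolding superfidelity_def mtrace_erasure_unitary_ketbra[OF \<xi> \<open>U \<in> carrier_mat n n\<close> \<sigma>]
      mtrace_unitary_ketbra_sq[OF U \<psi>]
    by simp
qed

lemma channel_superfidelity_erasure_unitary:
  assumes \<xi>: "\<xi> \<in> carrier_mat n n" and U: "unitary n U" and \<sigma>: "density n \<sigma>"
  shows "channel_superfidelity n (\<lambda>A. mtrace A \<cdot>\<^sub>m \<xi>) (\<lambda>A. U * A * adj U) \<sigma>
       = Re (mtrace (adj (U * \<sigma>) * \<xi> * (U * \<sigma>)))"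
proof -
  let ?v = "Re (mtrace (adj (U * \<sigma>) * \<xi> * (U * \<sigma>)))"
  have "{superfidelity (ext_channel (\<lambda>A. mtrace A \<cdot>\<^sub>m \<xi>) n m \<xi>') (ext_channel (\<lambda>A. U * A * adj U) n m \<xi>') |
      m \<xi>'. pure_state (n*m) \<xi>' \<and> ptrace_Z n m \<xi>' = \<sigma>} = {?v}"
  proof (intro equalityI subsetI)
    fix x assume "x \<in> {superfidelity (ext_channel (\<lambda>A. mtrace A \<cdot>\<^sub>m \<xi>) n m \<xi>') (ext_channel (\<lambda>A. U * A * adj U) n m \<xi>') |
      m \<xi>'. pure_state (n*m) \<xi>' \<and> ptrace_Z n m \<xi>' = \<sigma>}"
    then show "x \<in> {?v}"
      unfolding pure_state_ketbra using superfidelity_erasure_unitary_ketbra[OF \<xi> U] by auto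
  next
    fix x assume "x \<in> {?v}"
    obtain \<psi> where pure: "pure_state (n*n) (ketbra (n*n) \<psi>)" and pt: "ptrace_Z n n (ketbra (n*n) \<psi>) = \<sigma>"
      using density_purification[OF \<sigma>] .
    then obtain \<psi>' where "sq_norm (n*n) (\<lambda>p. \<psi>' $ p) = 1" "ketbra (n*n) \<psi> = ketbra (n*n) \<psi>'"
      unfolding pure_state_ketbra by blast
    then have "x = superfidelity (ext_channel (\<lambda>A. mtrace A \<cdot>\<^sub>m \<xi>) n n (ketbra (n*n) \<psi>))
                                 (ext_channel (\<lambda>A. U * A * adj U) n n (ketbra (n*n) \<psi>))"
      using \<open>x \<in> {?v}\<close> pt superfidelity_erasure_unitary_ketbra[OF \<xi> U] by simp
    then show "x \<in> {superfidelity (ext_channel (\<lambda>A. mtrace A \<cdot>\<^sub>m \<xi>) n m \<xi>') (ext_channel (\<lambda>A. U * A * adj U) n m \<xi>') |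
      m \<xi>'. pure_state (n*m) \<xi>' \<and> ptrace_Z n m \<xi>' = \<sigma>}"
      using pure pt by blast
  qed
  then show ?thesis unfolding channel_superfidelity_def by simp
qed

lemma mtrace_sq_adj_conj:
  assumes \<xi>: "\<xi> \<in> carrier_mat n n" and U: "U \<in> carrier_mat n n"
    and \<sigma>: "\<sigma> \<in> carrier_mat n n" and herm: "adj \<sigma> = \<sigma>"
  shows "mtrace (\<sigma> * \<sigma> * adj U * \<xi> * U) = mtrace (adj (U * \<sigma>) * \<xi> * (U * \<sigma>))"
proof -
  have U': "adj U \<in> carrier_mat n n" using U by simp
  have Y: "\<sigma> * adj U * \<xi> \<in> carrier_mat n n" using \<sigma> U' \<xi> by (metis mult_carrier_mat)
  then have X: "\<sigma> * adj U * \<xi> * U \<in> carrier_mat n n" using U by (metis mult_carrier_mat)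
  have "\<sigma> * \<sigma> * adj U * \<xi> * U = \<sigma> * (\<sigma> * adj U) * \<xi> * U"
    by (simp only: assoc_mult_mat[OF \<sigma> \<sigma> U'])
  also have "\<dots> = \<sigma> * (\<sigma> * adj U * \<xi>) * U"
    using \<sigma> U' \<xi> by (simp add: assoc_mult_mat[of \<sigma> n n "\<sigma> * adj U" n \<xi> n])
  also have "\<dots> = \<sigma> * (\<sigma> * adj U * \<xi> * U)"
    by (rule assoc_mult_mat[OF \<sigma> Y U])
  finally have "mtrace (\<sigma> * \<sigma> * adj U * \<xi> * U) = mtrace ((\<sigma> * adj U * \<xi> * U) * \<sigma>)"
    using mtrace_mult_comm[OF \<sigma> X] by simp
  also have "(\<sigma> * adj U * \<xi> * U) * \<sigma> = adj (U * \<sigma>) * \<xi> * (U * \<sigma>)"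
    unfolding adj_mult[OF U \<sigma>] herm by (rule assoc_mult_mat[OF Y U \<sigma>])
  finally show ?thesis .
qed

lemma quad_form_one_mat: "quad_form n (entries (1\<^sub>m n)) w = complex_of_real (sq_norm n w)"
proof -
  have "quad_form n (entries (1\<^sub>m n)) w = (\<Sum>i<n. \<Sum>j<n. if i = j then cnj (w i) * w j else 0)"
    unfolding quad_form_def by (intro sum.cong refl) auto
  then show ?thesis by (simp add: cnj_mult_self)
qed

lemma mtrace_adj_mult_density_le:
  assumes d: "density n \<xi>" and e: "eigenvalues_desc n \<xi> lam" and W: "W \<in> carrier_mat n k"
  shows "Re (mtrace (adj W * \<xi> * W)) \<le> lam ! 0 * Re (mtrace (adj W * W))"
proof -
  have \<xi>: "\<xi> \<in> carrier_mat n n" using density_carrier[OF d] .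
  have "Re (mtrace (adj W * \<xi> * W)) = (\<Sum>a<k. Re (quad_form n (entries \<xi>) (\<lambda>i. W $$ (i,a))))"
    by (simp add: mtrace_adj_mult_mult[OF W \<xi>] Re_sum)
  also have "\<dots> \<le> (\<Sum>a<k. lam ! 0 * sq_norm n (\<lambda>i. W $$ (i,a)))"
    by (intro sum_mono density_quad_form_le_top_eigenvalue[OF d e])
  also have "\<dots> = lam ! 0 * Re (mtrace (adj W * 1\<^sub>m n * W))"
    by (simp add: mtrace_adj_mult_mult[OF W one_carrier_mat] quad_form_one_mat Re_sum sum_distrib_left)
  also have "adj W * 1\<^sub>m n = adj W" using W by (simp add: right_mult_one_mat[of "adj W" k n])
  finally show ?thesis .
qed

lemma density_mtrace_sq_le:
  assumes d: "density n \<sigma>" and e: "eigenvalues_desc n \<sigma> mu"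
  shows "Re (mtrace (\<sigma> * \<sigma>)) \<le> mu ! 0"
proof -
  have \<sigma>: "\<sigma> \<in> carrier_mat n n" using density_carrier[OF d] .
  have mu: "0 \<le> mu ! i" "mu ! i \<le> mu ! 0" if "i < n" for i
    using density_eigenvalue_nonneg[OF d e that] eigenvalues_desc_le_first[OF e that] .
  have "complex_of_real (\<Sum>i<n. mu ! i ^ 1) = mtrace (\<sigma> ^\<^sub>m 1)"
    by (rule eigenvalues_desc_mtrace_pow[OF e, symmetric])
  also have "\<dots> = 1" using density_mtrace[OF d] \<sigma> by simp
  finally have sum_mu: "(\<Sum>i<n. mu ! i) = 1" by (simp only: power_one_right of_real_eq_1_iff)
  have "Re (mtrace (\<sigma> * \<sigma>)) = (\<Sum>i<n. mu ! i ^ 2)"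
    using eigenvalues_desc_mtrace_pow[OF e, of 2] \<sigma> by (simp add: numeral_2_eq_2)
  also have "\<dots> \<le> (\<Sum>i<n. mu ! 0 * mu ! i)"
    using mu by (intro sum_mono) (simp add: power2_eq_square mult_right_mono)
  also have "\<dots> = mu ! 0" using sum_mu by (simp flip: sum_distrib_left)
  finally show ?thesis .
qed

lemma adj_unitary_mult_self:
  assumes U: "unitary n U" and \<sigma>: "\<sigma> \<in> carrier_mat n n" and herm: "adj \<sigma> = \<sigma>"
  shows "adj (U * \<sigma>) * (U * \<sigma>) = \<sigma> * \<sigma>"
proof -
  have Uc: "U \<in> carrier_mat n n" and UU: "adj U * U = 1\<^sub>m n" using U unfolding unitary_def by blast+
  have "adj U * (U * \<sigma>) = \<sigma>"
    using Uc \<sigma> UU by (simp add: assoc_mult_mat[of "adj U" n n U n \<sigma> n, symmetric])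
  then show ?thesis
    unfolding adj_mult[OF Uc \<sigma>] herm
    using Uc \<sigma> by (simp add: assoc_mult_mat[of \<sigma> n n "adj U" n "U * \<sigma>" n])
qed

lemma mtrace_adj_mult_density_real:
  assumes "density n \<xi>" "W \<in> carrier_mat n k"
  shows "mtrace (adj W * \<xi> * W) \<in> \<real>"
  unfolding mtrace_adj_mult_mult[OF assms(2) density_carrier[OF assms(1)]]
  by (intro sum_in_Reals density_quad_form(1)[OF assms(1)])

lemma mtrace_conj_density_le_eigenvalues:
  assumes \<xi>: "density n \<xi>" and U: "unitary n U" and \<sigma>: "density n \<sigma>"
    and e\<xi>: "eigenvalues_desc n \<xi> lam" and e\<sigma>: "eigenvalues_desc n \<sigma> mu"
  shows "Re (mtrace (adj (U * \<sigma>) * \<xi> * (U * \<sigma>))) \<le> (\<Sum>i<n. lam ! i * mu ! i)"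
proof -
  have \<sigma>_herm: "adj \<sigma> = \<sigma>" using \<sigma> unfolding density_def by blast
  have W: "U * \<sigma> \<in> carrier_mat n n"
    using U density_carrier[OF \<sigma>] unfolding unitary_def by (metis mult_carrier_mat)
  have "Re (mtrace (adj (U * \<sigma>) * \<xi> * (U * \<sigma>))) \<le> lam ! 0 * Re (mtrace (\<sigma> * \<sigma>))"
    using mtrace_adj_mult_density_le[OF \<xi> e\<xi> W]
    unfolding adj_unitary_mult_self[OF U density_carrier[OF \<sigma>] \<sigma>_herm] .
  also have "\<dots> \<le> lam ! 0 * mu ! 0"
    by (rule mult_left_mono[OF density_mtrace_sq_le[OF \<sigma> e\<sigma>]
          density_eigenvalue_nonneg[OF \<xi> e\<xi> density_dim_pos[OF \<xi>]]])
  also have "\<dots> \<le> (\<Sum>i<n. lam ! i * mu ! i)"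
    using density_eigenvalue_nonneg[OF \<xi> e\<xi>] density_eigenvalue_nonneg[OF \<sigma> e\<sigma>] density_dim_pos[OF \<sigma>]
    by (intro member_le_sum) auto
  finally show ?thesis .
qed


theorem mainTheorem5:
  fixes n :: nat and \<xi> U \<sigma> :: "complex mat" and lam mu :: "real list"
  assumes "density n \<xi>"
    and "unitary n U"
    and "density n \<sigma>"
    and "eigenvalues_desc n \<xi> lam"
    and "eigenvalues_desc n \<sigma> mu"
  shows "complex_of_real (channel_superfidelity n (\<lambda>A. mtrace A \<cdot>\<^sub>m \<xi>) (\<lambda>A. U * A * adj U) \<sigma>)
           = mtrace (\<sigma> * \<sigma> * adj U * \<xi> * U)
       \<and> channel_superfidelity n (\<lambda>A. mtrace A \<cdot>\<^sub>m \<xi>) (\<lambda>A. U * A * adj U) \<sigma>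
           \<le> (\<Sum>i<n. lam ! i * mu ! i)"
proof -
  have \<xi>: "\<xi> \<in> carrier_mat n n" using density_carrier[OF assms(1)] .
  have U: "U \<in> carrier_mat n n" using assms(2) unfolding unitary_def by blast
  have \<sigma>: "\<sigma> \<in> carrier_mat n n" "adj \<sigma> = \<sigma>" using assms(3) unfolding density_def by blast+
  have "channel_superfidelity n (\<lambda>A. mtrace A \<cdot>\<^sub>m \<xi>) (\<lambda>A. U * A * adj U) \<sigma>
      = Re (mtrace (adj (U * \<sigma>) * \<xi> * (U * \<sigma>)))"
    by (rule channel_superfidelity_erasure_unitary[OF \<xi> assms(2,3)])
  moreover have "mtrace (adj (U * \<sigma>) * \<xi> * (U * \<sigma>)) \<in> \<real>"
    by (rule mtrace_adj_mult_density_real[OF assms(1), of _ n]) (use U \<sigma> in simp)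
  moreover have "mtrace (\<sigma> * \<sigma> * adj U * \<xi> * U) = mtrace (adj (U * \<sigma>) * \<xi> * (U * \<sigma>))"
    by (rule mtrace_sq_adj_conj[OF \<xi> U \<sigma>])
  moreover have "Re (mtrace (adj (U * \<sigma>) * \<xi> * (U * \<sigma>))) \<le> (\<Sum>i<n. lam ! i * mu ! i)"
    by (rule mtrace_conj_density_le_eigenvalues[OF assms])
  ultimately show ?thesis by simp
qed

end
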